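(* Let $A^{(1)},A^{(2)},A^{(3)},A^{(4)}$ be i.i.d. random variables with values in $\{1,2,3,\dots\}$, and let $X^{(a)},Y^{(b)},Z^{(c)}$ ($a,b,c\ge1$) be i.i.d. random variables with values in $[0,\infty)$, all of these random variables mutually independent. Then $$\max\Big(\sum_{a=1}^{A^{(1)}}X^{(a)},\ \sum_{b=1}^{A^{(2)}}Y^{(b)}\Big)\ \ge_{\mathrm{st}}\ \sum_{a=1}^{\max(A^{(3)},A^{(4)})}Z^{(a)}.$$
   Context: For random variables $X,Y$ with domains $D_X,D_Y\subseteq\mathbb{R}$, $X\ge_{\mathrm{st}}Y$ ($X$ stochastically dominates $Y$) means $\Pr(X>z)\ge\Pr(Y>z)$ for all $z\in D_X\cap D_Y$. *)

theory Defs
  imports "HOL-Probability.Probability"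
begin

datatype rv_idx = IA nat | IX nat | IY nat | IZ nat

text \<open>The joint family, all viewed as real-valued (the integer-valued A^(i) are
  embedded into the reals, which does not change the generated sigma-algebras).\<close>
fun joint_family ::
  "(nat \<Rightarrow> 'a \<Rightarrow> nat) \<Rightarrow> (nat \<Rightarrow> 'a \<Rightarrow> real) \<Rightarrow> (nat \<Rightarrow> 'a \<Rightarrow> real) \<Rightarrow>
   (nat \<Rightarrow> 'a \<Rightarrow> real) \<Rightarrow> rv_idx \<Rightarrow> 'a \<Rightarrow> real" where
  "joint_family A X Y Z (IA i) = (\<lambda>\<omega>. real (A i \<omega>))"
| "joint_family A X Y Z (IX a) = X a"
| "joint_family A X Y Z (IY b) = Y b"
| "joint_family A X Y Z (IZ c) = Z c"

definition rv_indices :: "rv_idx set" where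
  "rv_indices = IA ` {1..4} \<union> IX ` {1..} \<union> IY ` {1..} \<union> IZ ` {1..}"

end

theory Submission
  imports Defs
begin

text \<open>Split both events according to the values (m, n) of the two counts. On
  {A 1 = m, A 2 = n}, the maximum of the two random sums is at least the partial sum up to
  max m n of X (if n \<le> m) or of Y (otherwise); by independence this sub-event has
  probability P(A = m) P(A = n) P(Z 1 + ... + Z (max m n) > z), exactly the probability
  of the piece {A 3 = m, A 4 = n} of the right-hand event. Summing over (m, n) gives the
  domination.\<close>

lemma (in prob_space) indep_vars_reindex:
  assumes indep: "indep_vars M' X (f ` K)" and inj: "inj_on f K"
  shows "indep_vars (\<lambda>k. M' (f k)) (\<lambda>k. X (f k)) K"
proof (cases "K = {}")
  case True
  then show ?thesis by (simp add: indep_vars_def indep_sets_def)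
next
  case False
  let ?T = "\<lambda>\<omega>. \<lambda>i\<in>f ` K. X i \<omega>" and ?R = "\<lambda>g. \<lambda>k\<in>K. g (f k)"
  have rv: "random_variable (M' i) (X i)" if "i \<in> f ` K" for i
    using indep that by (auto simp: indep_vars_def)
  have T: "?T \<in> measurable M (\<Pi>\<^sub>M i\<in>f ` K. M' i)"
    using rv by (intro measurable_restrict) auto
  have R: "?R \<in> measurable (\<Pi>\<^sub>M i\<in>f ` K. M' i) (\<Pi>\<^sub>M k\<in>K. M' (f k))"
    by (intro measurable_restrict measurable_component_singleton) auto
  have "distr M (\<Pi>\<^sub>M k\<in>K. M' (f k)) (\<lambda>\<omega>. \<lambda>k\<in>K. X (f k) \<omega>) = distr M (\<Pi>\<^sub>M k\<in>K. M' (f k)) (?R \<circ> ?T)"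
    by (intro distr_cong) (auto simp: fun_eq_iff)
  also have "\<dots> = distr (distr M (\<Pi>\<^sub>M i\<in>f ` K. M' i) ?T) (\<Pi>\<^sub>M k\<in>K. M' (f k)) ?R"
    using R T by (rule distr_distr[symmetric])
  also have "distr M (\<Pi>\<^sub>M i\<in>f ` K. M' i) ?T = (\<Pi>\<^sub>M i\<in>f ` K. distr M (M' i) (X i))"
    using indep False rv by (subst indep_vars_iff_distr_eq_PiM'[symmetric]) auto
  also have "distr (\<Pi>\<^sub>M i\<in>f ` K. distr M (M' i) (X i)) (\<Pi>\<^sub>M k\<in>K. M' (f k)) ?R
      = distr (\<Pi>\<^sub>M i\<in>f ` K. distr M (M' i) (X i)) (\<Pi>\<^sub>M k\<in>K. distr M (M' (f k)) (X (f k))) ?R"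
    by (intro distr_cong sets_PiM_cong) auto
  also have "\<dots> = (\<Pi>\<^sub>M k\<in>K. distr M (M' (f k)) (X (f k)))"
    using rv inj by (intro distr_PiM_reindex prob_space_distr) auto
  finally show ?thesis
    by (rule indep_vars_iff_distr_eq_PiM'[THEN iffD2, rotated 2]) (use False rv in auto)
qed

lemma (in prob_space) distr_sum_eq_if_indep_marginals_eq:
  fixes V W :: "'i \<Rightarrow> 'a \<Rightarrow> real"
  assumes "indep_vars (\<lambda>_. borel) V K" "indep_vars (\<lambda>_. borel) W K"
    and "\<And>k. k \<in> K \<Longrightarrow> distr M borel (V k) = distr M borel (W k)"
  shows "distr M borel (\<lambda>\<omega>. \<Sum>k\<in>K. V k \<omega>) = distr M borel (\<lambda>\<omega>. \<Sum>k\<in>K. W k \<omega>)"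
proof (cases "K = {}")
  case False
  have joint: "distr M (\<Pi>\<^sub>M k\<in>K. borel) (\<lambda>\<omega>. \<lambda>k\<in>K. U k \<omega>) = (\<Pi>\<^sub>M k\<in>K. distr M borel (U k))"
    if "indep_vars (\<lambda>_. borel) U K" for U :: "'i \<Rightarrow> 'a \<Rightarrow> real"
    using that False by (subst indep_vars_iff_distr_eq_PiM'[symmetric]) (auto simp: indep_vars_def)
  have sum_via_joint: "distr M borel (\<lambda>\<omega>. \<Sum>k\<in>K. U k \<omega>)
      = distr (\<Pi>\<^sub>M k\<in>K. distr M borel (U k)) borel (\<lambda>g. \<Sum>k\<in>K. g k)"
    if "indep_vars (\<lambda>_. borel) U K" for U :: "'i \<Rightarrow> 'a \<Rightarrow> real"
  proof -
    have "(\<lambda>\<omega>. \<lambda>k\<in>K. U k \<omega>) \<in> measurable M (\<Pi>\<^sub>M k\<in>K. borel)"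
      using that by (intro measurable_restrict) (auto simp: indep_vars_def)
    moreover have "(\<lambda>g. \<Sum>k\<in>K. g k) \<in> borel_measurable (\<Pi>\<^sub>M k\<in>K. (borel :: real measure))"
      by (intro borel_measurable_sum measurable_component_singleton)
    ultimately have "distr M borel (\<lambda>\<omega>. \<Sum>k\<in>K. U k \<omega>)
        = distr (distr M (\<Pi>\<^sub>M k\<in>K. borel) (\<lambda>\<omega>. \<lambda>k\<in>K. U k \<omega>)) borel (\<lambda>g. \<Sum>k\<in>K. g k)"
      by (subst distr_distr) (auto simp: comp_def intro!: distr_cong sum.cong)
    then show ?thesis
      using joint[OF that] by simp
  qed
  show ?thesis
    using assms by (simp add: sum_via_joint cong: PiM_cong)
qed simp

lemma (in prob_space) indep_vars_sum_blocks:
  fixes F :: "'i \<Rightarrow> 'a \<Rightarrow> real"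
  assumes "indep_vars (\<lambda>_. borel) F I" "\<And>l. l \<in> L \<Longrightarrow> K l \<subseteq> I" "disjoint_family_on K L"
  shows "indep_vars (\<lambda>_. borel) (\<lambda>l \<omega>. \<Sum>i\<in>K l. F i \<omega>) L"
proof -
  have "indep_vars (\<lambda>_. borel) (\<lambda>l \<omega>. (\<lambda>g. \<Sum>i\<in>K l. g i) (\<lambda>i\<in>K l. F i \<omega>)) L"
    by (rule indep_vars_compose2[OF indep_vars_restrict[OF assms]])
       (auto intro!: borel_measurable_sum measurable_component_singleton)
  then show ?thesis
    by (simp cong: sum.cong)
qed

lemma (in finite_measure) measure_le_if_disjoint_matching:
  fixes E H :: "'i \<Rightarrow> 'a set"
  assumes "countable I"
    and sets: "\<And>i. i \<in> I \<Longrightarrow> E i \<in> sets M" "\<And>i. i \<in> I \<Longrightarrow> H i \<in> sets M"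
    and disj: "disjoint_family_on E I" "disjoint_family_on H I"
    and match: "\<And>i. i \<in> I \<Longrightarrow> measure M (E i) = measure M (H i)"
    and "T \<subseteq> (\<Union>i\<in>I. H i)" "(\<Union>i\<in>I. E i) \<subseteq> S" "S \<in> sets M"
  shows "measure M T \<le> measure M S"
proof -
  have "emeasure M (\<Union>i\<in>I. H i) = (\<integral>\<^sup>+i. emeasure M (H i) \<partial>count_space I)"
    using sets disj by (intro emeasure_UN_countable \<open>countable I\<close>)
  also have "\<dots> = (\<integral>\<^sup>+i. emeasure M (E i) \<partial>count_space I)"
    using match by (intro nn_integral_cong) (simp add: emeasure_eq_measure)
  also have "\<dots> = emeasure M (\<Union>i\<in>I. E i)"
    using sets disj by (intro emeasure_UN_countable[symmetric] \<open>countable I\<close>)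
  finally have "emeasure M (\<Union>i\<in>I. H i) = emeasure M (\<Union>i\<in>I. E i)" .
  then have "measure M (\<Union>i\<in>I. H i) = measure M (\<Union>i\<in>I. E i)"
    by (simp add: measure_def)
  moreover have "(\<Union>i\<in>I. H i) \<in> sets M"
    using sets by (intro sets.countable_UN' \<open>countable I\<close>) auto
  ultimately show ?thesis
    using assms by (metis finite_measure_mono order.trans)
qed

lemma rv_indices_memI:
  "i \<in> {1..4} \<Longrightarrow> IA i \<in> rv_indices" "a \<ge> 1 \<Longrightarrow> IX a \<in> rv_indices"
  "a \<ge> 1 \<Longrightarrow> IY a \<in> rv_indices" "a \<ge> 1 \<Longrightarrow> IZ a \<in> rv_indices"
  by (simp_all add: rv_indices_def)

locale iid_compound_sums = prob_space M for M :: "'a measure" +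
  fixes A :: "nat \<Rightarrow> 'a \<Rightarrow> nat" and X Y Z :: "nat \<Rightarrow> 'a \<Rightarrow> real"
  assumes A_measurable: "\<And>i. i \<in> {1..4} \<Longrightarrow> A i \<in> measurable M (count_space UNIV)"
    and A_ident: "\<And>i. i \<in> {1..4} \<Longrightarrow>
      distr M (count_space UNIV) (A i) = distr M (count_space UNIV) (A 1)"
    and X_ident: "\<And>a. a \<ge> 1 \<Longrightarrow> distr M borel (X a) = distr M borel (X 1)"
    and Y_ident: "\<And>b. b \<ge> 1 \<Longrightarrow> distr M borel (Y b) = distr M borel (X 1)"
    and Z_ident: "\<And>c. c \<ge> 1 \<Longrightarrow> distr M borel (Z c) = distr M borel (X 1)"
    and indep: "indep_vars (\<lambda>_. borel) (joint_family A X Y Z) rv_indices"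
begin

abbreviation "family \<equiv> joint_family A X Y Z"

lemma family_measurable: "i \<in> rv_indices \<Longrightarrow> family i \<in> borel_measurable M"
  using indep by (auto simp: indep_vars_def)

lemma prob_A_eq:
  assumes "i \<in> {1..4}"
  shows "prob {\<omega> \<in> space M. A i \<omega> = m} = prob {\<omega> \<in> space M. A 1 \<omega> = m}"
proof -
  have "prob {\<omega> \<in> space M. A i \<omega> = m} = measure (distr M (count_space UNIV) (A i)) {m}"
    using A_measurable[OF assms] by (subst measure_distr) (auto intro!: arg_cong[where f=prob])
  also have "\<dots> = measure (distr M (count_space UNIV) (A 1)) {m}"
    using A_ident[OF assms] by simp
  also have "\<dots> = prob {\<omega> \<in> space M. A 1 \<omega> = m}"
    using A_measurable[of 1] by (subst measure_distr) (auto intro!: arg_cong[where f=prob])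
  finally show ?thesis .
qed

lemma distr_partial_sum_eq:
  assumes "W \<in> {IX, IY, IZ}"
  shows "distr M borel (\<lambda>\<omega>. \<Sum>a=1..k. family (W a) \<omega>) = distr M borel (\<lambda>\<omega>. \<Sum>a=1..k. Z a \<omega>)"
proof -
  have indep_block: "indep_vars (\<lambda>_. borel) (\<lambda>a. family (V a)) {1..k}" if "V \<in> {IX, IY, IZ}" for V
  proof -
    have "V ` {1..k} \<subseteq> rv_indices" "inj_on V {1..k}"
      using that by (auto simp: rv_indices_memI inj_on_def)
    then show ?thesis
      using indep_vars_reindex[OF indep_vars_subset[OF indep], of V "{1..k}"] by simp
  qed
  have marginal: "distr M borel (family (V a)) = distr M borel (X 1)"
    if "V \<in> {IX, IY, IZ}" "a \<in> {1..k}" for V a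
    using that X_ident[of a] Y_ident[of a] Z_ident[of a] by auto
  have "distr M borel (\<lambda>\<omega>. \<Sum>a=1..k. family (W a) \<omega>) = distr M borel (\<lambda>\<omega>. \<Sum>a=1..k. family (IZ a) \<omega>)"
  proof (rule distr_sum_eq_if_indep_marginals_eq[OF indep_block[OF assms] indep_block])
    fix a assume "a \<in> {1..k}"
    then show "distr M borel (family (W a)) = distr M borel (family (IZ a))"
      using marginal[OF assms] marginal[of IZ] by simp
  qed simp
  then show ?thesis
    by simp
qed

lemma partial_sum_measurable:
  assumes "W \<in> {IX, IY, IZ}"
  shows "(\<lambda>\<omega>. \<Sum>a=1..k. family (W a) \<omega>) \<in> borel_measurable M"
  using assms by (intro borel_measurable_sum family_measurable) (auto simp: rv_indices_memI)

lemma random_partial_sum_measurable: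
  assumes "i \<in> {1..4}" "W \<in> {IX, IY, IZ}"
  shows "(\<lambda>\<omega>. \<Sum>a=1..A i \<omega>. family (W a) \<omega>) \<in> borel_measurable M"
  using partial_sum_measurable[OF assms(2)] A_measurable[OF assms(1)]
  by (rule measurable_compose_countable') simp

lemma A_A_partial_sum_gt_event:
  assumes "i \<in> {1..4}" "j \<in> {1..4}" "W \<in> {IX, IY, IZ}"
  shows "{\<omega> \<in> space M. A i \<omega> = m \<and> A j \<omega> = n \<and> (\<Sum>a=1..k. family (W a) \<omega>) > z} \<in> sets M"
proof -
  have [measurable]: "A i \<in> measurable M (count_space UNIV)" "A j \<in> measurable M (count_space UNIV)"
    "(\<lambda>\<omega>. \<Sum>a=1..k. family (W a) \<omega>) \<in> borel_measurable M"
    using assms A_measurable partial_sum_measurable[OF assms(3)] by simp_all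
  show ?thesis
    by measurable
qed

lemma prob_partial_sum_gt:
  assumes "W \<in> {IX, IY, IZ}"
  shows "prob {\<omega> \<in> space M. (\<Sum>a=1..k. family (W a) \<omega>) > z}
    = prob {\<omega> \<in> space M. (\<Sum>a=1..k. Z a \<omega>) > z}"
proof -
  have "prob {\<omega> \<in> space M. (\<Sum>a=1..k. family (V a) \<omega>) > z}
      = measure (distr M borel (\<lambda>\<omega>. \<Sum>a=1..k. family (V a) \<omega>)) {z<..}"
    if "V \<in> {IX, IY, IZ}" for V
    using partial_sum_measurable[OF that]
    by (subst measure_distr) (auto intro!: arg_cong[where f=prob])
  from this[OF assms] this[of IZ] show ?thesis
    using distr_partial_sum_eq[OF assms] distr_partial_sum_eq[of IZ] by simp
qed

lemma prob_A_A_partial_sum_gt: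
  assumes ij: "i \<in> {1..4}" "j \<in> {1..4}" "i \<noteq> j" and W: "W \<in> {IX, IY, IZ}"
  shows "prob {\<omega> \<in> space M. A i \<omega> = m \<and> A j \<omega> = n \<and> (\<Sum>a=1..k. family (W a) \<omega>) > z}
    = prob {\<omega> \<in> space M. A 1 \<omega> = m} * prob {\<omega> \<in> space M. A 1 \<omega> = n}
      * prob {\<omega> \<in> space M. (\<Sum>a=1..k. Z a \<omega>) > z}"
proof -
  define K where "K = (!) [{IA i}, {IA j}, W ` {1..k}]"
  define B where "B = (!) [{real m}, {real n}, {z<..}]"
  define S where "S = (\<lambda>l \<omega>. \<Sum>i\<in>K l. family i \<omega>)"
  have "indep_vars (\<lambda>_. borel) S {0, 1, 2}"
    unfolding S_def using ij W
    by (intro indep_vars_sum_blocks[OF indep])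
       (auto simp: K_def rv_indices_memI disjoint_family_on_def less_Suc_eq)
  then have "prob (\<Inter>l\<in>{0, 1, 2}. S l -` B l \<inter> space M) = (\<Prod>l\<in>{0, 1, 2}. prob (S l -` B l \<inter> space M))"
    by (rule indep_varsD) (auto simp: B_def less_Suc_eq)
  moreover have "S 0 = (\<lambda>\<omega>. real (A i \<omega>))" "S 1 = (\<lambda>\<omega>. real (A j \<omega>))"
    by (simp_all add: S_def K_def)
  moreover have "S 2 = (\<lambda>\<omega>. \<Sum>a=1..k. family (W a) \<omega>)"
    using W by (auto simp: S_def K_def sum.reindex inj_on_def)
  ultimately show ?thesis
    using prob_A_eq[OF ij(1)] prob_A_eq[OF ij(2)] prob_partial_sum_gt[OF W]
    by (simp add: B_def vimage_def Collect_conj_eq Int_ac mult.assoc)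
qed

theorem prob_sum_max_index_le_max_sums:
  "prob {\<omega> \<in> space M. (\<Sum>a=1..max (A 3 \<omega>) (A 4 \<omega>). Z a \<omega>) > z}
    \<le> prob {\<omega> \<in> space M. max (\<Sum>a=1..A 1 \<omega>. X a \<omega>) (\<Sum>b=1..A 2 \<omega>. Y b \<omega>) > z}"
proof -
  define W where "W m n = (if n \<le> m then IX else IY)" for m n :: nat
  have W_cases: "W m n \<in> {IX, IY, IZ}" for m n
    by (simp add: W_def)
  define E where "E = (\<lambda>(m, n). {\<omega> \<in> space M. A 1 \<omega> = m \<and> A 2 \<omega> = n \<and>
    (\<Sum>a=1..max m n. family (W m n a) \<omega>) > z})"
  define H where "H = (\<lambda>(m, n). {\<omega> \<in> space M. A 3 \<omega> = m \<and> A 4 \<omega> = n \<and>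
    (\<Sum>a=1..max m n. family (IZ a) \<omega>) > z})"
  have [measurable]: "(\<lambda>\<omega>. \<Sum>a=1..A 1 \<omega>. X a \<omega>) \<in> borel_measurable M"
    "(\<lambda>\<omega>. \<Sum>a=1..A 2 \<omega>. Y a \<omega>) \<in> borel_measurable M"
    using random_partial_sum_measurable[of 1 IX] random_partial_sum_measurable[of 2 IY] by simp_all
  show ?thesis
  proof (rule measure_le_if_disjoint_matching[where I=UNIV and E=E and H=H])
    show "E p \<in> sets M" for p
      using A_A_partial_sum_gt_event[of 1 2 "W (fst p) (snd p)"] W_cases by (cases p) (simp add: E_def)
    show "H p \<in> sets M" for p
      using A_A_partial_sum_gt_event[of 3 4 IZ] by (cases p) (simp add: H_def)
    show "disjoint_family_on E UNIV" "disjoint_family_on H UNIV"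
      by (auto simp: disjoint_family_on_def E_def H_def)
    show "prob (E p) = prob (H p)" for p
      using prob_A_A_partial_sum_gt[of 1 2 "W (fst p) (snd p)"] prob_A_A_partial_sum_gt[of 3 4 IZ]
      by (auto simp: E_def H_def W_def split: prod.split)
    show "{\<omega> \<in> space M. (\<Sum>a=1..max (A 3 \<omega>) (A 4 \<omega>). Z a \<omega>) > z} \<subseteq> (\<Union>p. H p)"
      by (auto simp: H_def)
    show "(\<Union>p. E p) \<subseteq> {\<omega> \<in> space M. max (\<Sum>a=1..A 1 \<omega>. X a \<omega>) (\<Sum>b=1..A 2 \<omega>. Y b \<omega>) > z}"
      by (auto simp: E_def W_def max_def split: if_splits)
    show "{\<omega> \<in> space M. max (\<Sum>a=1..A 1 \<omega>. X a \<omega>) (\<Sum>b=1..A 2 \<omega>. Y b \<omega>) > z} \<in> sets M"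
      by measurable
  qed simp
qed

end

theorem corollary1:
  fixes M :: "'a measure"
    and A :: "nat \<Rightarrow> 'a \<Rightarrow> nat"
    and X Y Z :: "nat \<Rightarrow> 'a \<Rightarrow> real"
  assumes "prob_space M"
    and A_meas: "\<And>i. i \<in> {1..4} \<Longrightarrow> A i \<in> measurable M (count_space UNIV)"
    and A_pos: "\<And>i \<omega>. i \<in> {1..4} \<Longrightarrow> \<omega> \<in> space M \<Longrightarrow> A i \<omega> \<ge> 1"
    and A_ident: "\<And>i. i \<in> {1..4} \<Longrightarrow>
                    distr M (count_space UNIV) (A i) = distr M (count_space UNIV) (A 1)"
    and X_meas: "\<And>a. a \<ge> 1 \<Longrightarrow> X a \<in> borel_measurable M"
    and Y_meas: "\<And>b. b \<ge> 1 \<Longrightarrow> Y b \<in> borel_measurable M"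
    and Z_meas: "\<And>c. c \<ge> 1 \<Longrightarrow> Z c \<in> borel_measurable M"
    and X_nonneg: "\<And>a \<omega>. a \<ge> 1 \<Longrightarrow> \<omega> \<in> space M \<Longrightarrow> X a \<omega> \<ge> 0"
    and Y_nonneg: "\<And>b \<omega>. b \<ge> 1 \<Longrightarrow> \<omega> \<in> space M \<Longrightarrow> Y b \<omega> \<ge> 0"
    and Z_nonneg: "\<And>c \<omega>. c \<ge> 1 \<Longrightarrow> \<omega> \<in> space M \<Longrightarrow> Z c \<omega> \<ge> 0"
    and X_ident: "\<And>a. a \<ge> 1 \<Longrightarrow> distr M borel (X a) = distr M borel (X 1)"
    and Y_ident: "\<And>b. b \<ge> 1 \<Longrightarrow> distr M borel (Y b) = distr M borel (X 1)"
    and Z_ident: "\<And>c. c \<ge> 1 \<Longrightarrow> distr M borel (Z c) = distr M borel (X 1)"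
    and indep: "prob_space.indep_vars M (\<lambda>_. borel) (joint_family A X Y Z) rv_indices"
  shows "\<forall>z::real.
           measure M {\<omega> \<in> space M.
              max (\<Sum>a=1..A 1 \<omega>. X a \<omega>) (\<Sum>b=1..A 2 \<omega>. Y b \<omega>) > z}
           \<ge> measure M {\<omega> \<in> space M. (\<Sum>a=1..max (A 3 \<omega>) (A 4 \<omega>). Z a \<omega>) > z}"
proof
  fix z :: real
  interpret iid_compound_sums M A X Y Z
    by (intro iid_compound_sums.intro iid_compound_sums_axioms.intro assms)
  show "measure M {\<omega> \<in> space M. max (\<Sum>a=1..A 1 \<omega>. X a \<omega>) (\<Sum>b=1..A 2 \<omega>. Y b \<omega>) > z}
    \<ge> measure M {\<omega> \<in> space M. (\<Sum>a=1..max (A 3 \<omega>) (A 4 \<omega>). Z a \<omega>) > z}"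
    by (rule prob_sum_max_index_le_max_sums)
qed

end
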